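(* Let $G=(V,E,T,c)$ be a $k$-terminal network and let $S\subset T$ with $S\neq\emptyset,T$. Then for every connected component $C\in CC(E_S)$, the boundary $\delta(C)$ is the minimum cutset separating the terminals $T\cap C$ from $T\setminus C$, i.e. $\delta(C)=E_{T\cap C}$.
   Context: A $k$-terminal network $G=(V,E,T,c)$ is a finite connected undirected graph $(V,E)$ with edge weights (capacities) $c:E\to\mathbb{R}_{>0}$ and a set $T\subseteq V$ of $|T|=k$ terminals. For $F\subseteq E$ let $c(F)=\sum_{e\in F}c(e)$; for $W\subseteq V$ let $\delta(W)$ be the set of edges with exactly one endpoint in $W$. For $S\subset T$ with $S\neq\emptyset,T$, write $\bar S=T\setminus S$; a cut $(W,V\setminus W)$ is $S$-separating if $W\cap T\in\{S,\bar S\}$, and $\mathrm{mincut}_G(S)$ is the minimum of $c(\delta(W))$ over all $S$-separating cuts. It is assumed (e.g. by a generic perturbation of the weights) that the minimizing cutset is unique; it is denoted $E_S$ (so $E_S=E_{\bar S}$). For $F\subseteq E$, $CC(F)$ denotes the set of vertex sets of connected components of $(V,E\setminus F)$. (Each component of $CC(E_S)$ contains at least one terminal and $|CC(E_S)|\ge 2$, so $T\cap C$ is a nonempty proper subset of $T$.) *)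

theory Defs
  imports Complex_Main
begin

text \<open>An undirected (multi)graph is given by a vertex set V, an edge set E and an
endpoint map ends: each edge has one (loop) or two endpoints in V.\<close>

definition cap :: "('e \<Rightarrow> real) \<Rightarrow> 'e set \<Rightarrow> real" where
  "cap c F = (\<Sum>e\<in>F. c e)"

definition delta :: "'e set \<Rightarrow> ('e \<Rightarrow> 'a set) \<Rightarrow> 'a set \<Rightarrow> 'e set" where
  "delta E ends W = {e\<in>E. \<exists>u\<in>ends e. \<exists>v\<in>ends e. u \<in> W \<and> v \<notin> W}"

definition adj :: "'e set \<Rightarrow> ('e \<Rightarrow> 'a set) \<Rightarrow> 'e set \<Rightarrow> ('a \<times> 'a) set" where
  "adj E ends F = {(u,v). \<exists>e\<in>E - F. u \<in> ends e \<and> v \<in> ends e}"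

definition connected_graph :: "'a set \<Rightarrow> 'e set \<Rightarrow> ('e \<Rightarrow> 'a set) \<Rightarrow> bool" where
  "connected_graph V E ends = (\<forall>u\<in>V. \<forall>v\<in>V. (u,v) \<in> (adj E ends {})\<^sup>*)"

definition CC :: "'a set \<Rightarrow> 'e set \<Rightarrow> ('e \<Rightarrow> 'a set) \<Rightarrow> 'e set \<Rightarrow> 'a set set" where
  "CC V E ends F = (\<lambda>v. {u. (v,u) \<in> (adj E ends F)\<^sup>*}) ` V"

definition kterminal_network ::
  "'a set \<Rightarrow> 'e set \<Rightarrow> ('e \<Rightarrow> 'a set) \<Rightarrow> 'a set \<Rightarrow> ('e \<Rightarrow> real) \<Rightarrow> nat \<Rightarrow> bool" where
  "kterminal_network V E ends T c k \<longleftrightarrow>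
     finite V \<and> finite E \<and>
     (\<forall>e\<in>E. ends e \<subseteq> V \<and> ends e \<noteq> {} \<and> card (ends e) \<le> 2) \<and>
     connected_graph V E ends \<and>
     (\<forall>e\<in>E. c e > 0) \<and>
     T \<subseteq> V \<and> card T = k"

definition separating :: "'a set \<Rightarrow> 'a set \<Rightarrow> 'a set \<Rightarrow> 'a set \<Rightarrow> bool" where
  "separating V T S W \<longleftrightarrow> W \<subseteq> V \<and> (W \<inter> T = S \<or> W \<inter> T = T - S)"

definition mincut :: "'a set \<Rightarrow> 'e set \<Rightarrow> ('e \<Rightarrow> 'a set) \<Rightarrow> 'a set \<Rightarrow> ('e \<Rightarrow> real) \<Rightarrow> 'a set \<Rightarrow> real" where
  "mincut V E ends T c S = Min ((\<lambda>W. cap c (delta E ends W)) ` {W. separating V T S W})"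

definition is_min_cutset ::
  "'a set \<Rightarrow> 'e set \<Rightarrow> ('e \<Rightarrow> 'a set) \<Rightarrow> 'a set \<Rightarrow> ('e \<Rightarrow> real) \<Rightarrow> 'a set \<Rightarrow> 'e set \<Rightarrow> bool" where
  "is_min_cutset V E ends T c S F \<longleftrightarrow>
     (\<exists>W. separating V T S W \<and> F = delta E ends W \<and> cap c F = mincut V E ends T c S)"

definition unique_mincuts ::
  "'a set \<Rightarrow> 'e set \<Rightarrow> ('e \<Rightarrow> 'a set) \<Rightarrow> 'a set \<Rightarrow> ('e \<Rightarrow> real) \<Rightarrow> bool" where
  "unique_mincuts V E ends T c \<longleftrightarrow>
     (\<forall>S. S \<subseteq> T \<and> S \<noteq> {} \<and> S \<noteq> T \<longrightarrow> (\<exists>!F. is_min_cutset V E ends T c S F))"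

definition E_S ::
  "'a set \<Rightarrow> 'e set \<Rightarrow> ('e \<Rightarrow> 'a set) \<Rightarrow> 'a set \<Rightarrow> ('e \<Rightarrow> real) \<Rightarrow> 'a set \<Rightarrow> 'e set" where
  "E_S V E ends T c S = (THE F. is_min_cutset V E ends T c S F)"

end

theory Submission
  imports Defs
begin

text \<open>Let \<open>W\<close> be the side of the minimum \<open>S\<close>-cut containing the component \<open>C\<close>. Since
  \<open>\<delta>(C) \<subseteq> E\<^sub>S = \<delta>(W)\<close>, the cut \<open>\<delta>(W)\<close> splits into the disjoint parts \<open>\<delta>(C)\<close> and
  \<open>\<delta>(W - C)\<close>. If some \<open>X\<close> separated \<open>T \<inter> C\<close> more cheaply than \<open>C\<close>, then \<open>(W - C) \<union> X\<close>
  would be an \<open>S\<close>-separating cut cheaper than \<open>\<delta>(W)\<close>. Hence \<open>\<delta>(C)\<close> is a minimum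
  \<open>(T \<inter> C)\<close>-cut, and by uniqueness it is \<open>E_(T \<inter> C)\<close>; the set \<open>T \<inter> C\<close> is a nonempty proper
  subset of \<open>T\<close> because \<open>G\<close> is connected and \<open>W\<close> misses some terminal.\<close>

lemma delta_subset: "delta E ends W \<subseteq> E"
  unfolding delta_def by blast

lemma finite_delta: "finite E \<Longrightarrow> finite (delta E ends W)"
  using delta_subset finite_subset by metis

lemma delta_empty: "delta E ends {} = {}"
  unfolding delta_def by blast

lemma delta_Diff_compl:
  assumes "\<forall>e\<in>E. ends e \<subseteq> V"
  shows "delta E ends (V - X) = delta E ends X"
  using assms unfolding delta_def by blast

lemma delta_Un_subset: "delta E ends (A \<union> B) \<subseteq> delta E ends A \<union> delta E ends B"
  unfolding delta_def by blast

lemma cap_mono: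
  assumes "finite E" "\<forall>e\<in>E. c e > 0" "A \<subseteq> B" "B \<subseteq> E"
  shows "cap c A \<le> cap c B"
  unfolding cap_def using assms
  by (intro sum_mono2) (auto intro: finite_subset less_imp_le)

lemma cap_Un_le:
  assumes "finite E" "\<forall>e\<in>E. c e > 0" "A \<subseteq> E" "B \<subseteq> E"
  shows "cap c (A \<union> B) \<le> cap c A + cap c B"
proof -
  have fin: "finite A" "finite B" using assms by (auto intro: finite_subset)
  have "sum c (A \<inter> B) \<ge> 0" using assms by (intro sum_nonneg) (auto intro: less_imp_le)
  moreover have "sum c (A \<union> B) = sum c A + sum c B - sum c (A \<inter> B)"
    using sum_Un[OF fin] by simp
  ultimately show ?thesis unfolding cap_def by linarith
qed

lemma cap_pos:
  assumes "finite E" "\<forall>e\<in>E. c e > 0" "A \<subseteq> E" "A \<noteq> {}"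
  shows "cap c A > 0"
  unfolding cap_def using assms by (intro sum_pos) (auto intro: finite_subset)

lemma finite_separating: "finite V \<Longrightarrow> finite {W. separating V T S W}"
  by (rule finite_subset[of _ "Pow V"]) (auto simp: separating_def)

lemma mincut_le:
  assumes "finite V" "separating V T S W"
  shows "mincut V E ends T c S \<le> cap c (delta E ends W)"
  unfolding mincut_def using assms finite_separating by (intro Min_le) auto

lemma min_cutset_no_terminals:
  assumes "finite V" "finite E" "\<forall>e\<in>E. c e > 0"
    and "is_min_cutset V E ends T c {} F"
  shows "F = {}"
proof (rule ccontr)
  assume "F \<noteq> {}"
  obtain W where W: "F = delta E ends W" "cap c F = mincut V E ends T c {}"
    using assms(4) unfolding is_min_cutset_def by blast
  have "separating V T {} {}"
    unfolding separating_def by blast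
  from mincut_le[OF assms(1) this] have "cap c F \<le> 0"
    using W(2) by (simp add: delta_empty cap_def)
  moreover have "cap c F > 0"
    using W(1) \<open>F \<noteq> {}\<close> by (intro cap_pos[OF assms(2,3)]) (simp add: delta_subset)
  ultimately show False by simp
qed

lemma is_min_cutsetI:
  assumes "finite V" "separating V T S W"
    and "\<And>X. separating V T S X \<Longrightarrow> cap c (delta E ends W) \<le> cap c (delta E ends X)"
  shows "is_min_cutset V E ends T c S (delta E ends W)"
proof -
  have "cap c (delta E ends W) = mincut V E ends T c S"
    unfolding mincut_def using assms finite_separating[OF assms(1)]
    by (intro Min_eqI[symmetric]) auto
  with assms(2) show ?thesis unfolding is_min_cutset_def by blast
qed

lemma E_S_min_cutset:
  assumes "unique_mincuts V E ends T c" "S \<subseteq> T" "S \<noteq> {}" "S \<noteq> T"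
  shows "is_min_cutset V E ends T c S (E_S V E ends T c S)"
proof -
  have "\<exists>!F. is_min_cutset V E ends T c S F"
    using assms unfolding unique_mincuts_def by blast
  then show ?thesis unfolding E_S_def by (rule theI')
qed

lemma E_S_eqI:
  assumes "unique_mincuts V E ends T c" "S \<subseteq> T" "S \<noteq> {}" "S \<noteq> T"
    and "is_min_cutset V E ends T c S F"
  shows "E_S V E ends T c S = F"
proof -
  have "\<exists>!F. is_min_cutset V E ends T c S F"
    using assms(1-4) unfolding unique_mincuts_def by blast
  then show ?thesis unfolding E_S_def using assms(5) by (rule the1_equality)
qed

text \<open>Both shores of a cut induce it, so a minimum cutset has a shore through any given vertex.\<close>

lemma min_cutset_shore_through:
  assumes "is_min_cutset V E ends T c S F" "\<forall>e\<in>E. ends e \<subseteq> V"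
    and "S \<subseteq> T" "T \<subseteq> V" "v \<in> V"
  obtains W where "separating V T S W" "delta E ends W = F"
    "cap c (delta E ends W) = mincut V E ends T c S" "v \<in> W"
proof -
  obtain W0 where W0: "separating V T S W0" "delta E ends W0 = F"
    "cap c (delta E ends W0) = mincut V E ends T c S"
    using assms(1) unfolding is_min_cutset_def by auto
  show ?thesis
  proof (cases "v \<in> W0")
    case True
    from that[OF W0 this] show ?thesis .
  next
    case False
    have "separating V T S (V - W0)"
      using W0(1) assms(3,4) unfolding separating_def by blast
    moreover have "delta E ends (V - W0) = delta E ends W0"
      by (rule delta_Diff_compl[OF assms(2)])
    moreover have "v \<in> V - W0"
      using False assms(5) by blast
    ultimately show ?thesis
      using that W0(2,3) by simp
  qed
qed

lemma rtrancl_adj_stays_in: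
  assumes "(u, v) \<in> (adj E ends F)\<^sup>*" "u \<in> W" "delta E ends W \<subseteq> F"
  shows "v \<in> W"
  using assms(1,2)
proof (induction rule: rtrancl_induct)
  case (step y z)
  then obtain e where "e \<in> E - F" "y \<in> ends e" "z \<in> ends e"
    unfolding adj_def by blast
  with step.IH step.prems assms(3) show ?case
    unfolding delta_def by blast
qed

lemma reachable_subset:
  assumes "v \<in> W" "delta E ends W \<subseteq> F"
  shows "{u. (v, u) \<in> (adj E ends F)\<^sup>*} \<subseteq> W"
proof
  fix u assume "u \<in> {u. (v, u) \<in> (adj E ends F)\<^sup>*}"
  then have "(v, u) \<in> (adj E ends F)\<^sup>*" by simp
  from rtrancl_adj_stays_in[OF this assms] show "u \<in> W" .
qed

lemma delta_reachable_subset: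
  "delta E ends {u. (v, u) \<in> (adj E ends F)\<^sup>*} \<subseteq> F"
  unfolding delta_def adj_def by (auto intro: rtrancl_into_rtrancl)

lemma connected_graph_delta_empty:
  assumes "connected_graph V E ends" "v \<in> V" "v \<in> C" "delta E ends C = {}"
  shows "V \<subseteq> C"
  using assms rtrancl_adj_stays_in[of v _ E ends "{}" C]
  unfolding connected_graph_def by blast

text \<open>An edge in both \<open>\<delta>(C)\<close> and \<open>\<delta>(W - C)\<close> has an endpoint in each, so, having at most two
  endpoints, it does not leave \<open>W\<close>.\<close>

lemma delta_split:
  assumes "\<forall>e\<in>E. finite (ends e) \<and> card (ends e) \<le> 2"
    and "C \<subseteq> W" "delta E ends C \<subseteq> delta E ends W"
  shows "delta E ends W = delta E ends C \<union> delta E ends (W - C)"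
    and "delta E ends C \<inter> delta E ends (W - C) = {}"
proof -
  show "delta E ends W = delta E ends C \<union> delta E ends (W - C)"
    using assms(2,3) unfolding delta_def by blast
  show "delta E ends C \<inter> delta E ends (W - C) = {}"
  proof (rule ccontr)
    assume "delta E ends C \<inter> delta E ends (W - C) \<noteq> {}"
    then obtain e a b where e: "e \<in> E" "a \<in> ends e" "a \<in> C" "b \<in> ends e" "b \<in> W - C"
      "e \<in> delta E ends C"
      unfolding delta_def by blast
    have "a \<noteq> b" using e by blast
    then have "card {a, b} = 2" by simp
    with e assms(1) have "ends e = {a, b}"
      by (metis card_seteq empty_subsetI insert_subset)
    with e assms(2) have "e \<notin> delta E ends W"
      unfolding delta_def by auto
    with e assms(3) show False by blast
  qed
qed

lemma cap_delta_split:
  assumes "finite E" "\<forall>e\<in>E. finite (ends e) \<and> card (ends e) \<le> 2"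
    and "C \<subseteq> W" "delta E ends C \<subseteq> delta E ends W"
  shows "cap c (delta E ends W) = cap c (delta E ends C) + cap c (delta E ends (W - C))"
  unfolding delta_split(1)[OF assms(2-4)] cap_def
  using delta_split(2)[OF assms(2-4)] finite_delta[OF assms(1)]
  by (intro sum.union_disjoint) auto

lemma cap_delta_le_uncross:
  assumes "finite V" "finite E" "\<forall>e\<in>E. c e > 0"
    and "\<forall>e\<in>E. finite (ends e) \<and> card (ends e) \<le> 2"
    and "separating V T S W" "cap c (delta E ends W) = mincut V E ends T c S"
    and "C \<subseteq> W" "delta E ends C \<subseteq> delta E ends W"
    and "X \<subseteq> V" "X \<inter> T = C \<inter> T"
  shows "cap c (delta E ends C) \<le> cap c (delta E ends X)"
proof -
  let ?D = "\<lambda>A. cap c (delta E ends A)"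
  have "((W - C) \<union> X) \<inter> T = W \<inter> T"
    using assms(7,10) by blast
  then have "separating V T S ((W - C) \<union> X)"
    using assms(5,9) unfolding separating_def by auto
  then have "?D W \<le> ?D ((W - C) \<union> X)"
    using mincut_le[OF assms(1)] assms(6) by simp
  also have "\<dots> \<le> cap c (delta E ends (W - C) \<union> delta E ends X)"
    by (rule cap_mono[OF assms(2,3) delta_Un_subset Un_least[OF delta_subset delta_subset]])
  also have "\<dots> \<le> ?D (W - C) + ?D X"
    by (rule cap_Un_le[OF assms(2,3) delta_subset delta_subset])
  finally show ?thesis
    using cap_delta_split[OF assms(2,4,7,8)] by simp
qed

lemma min_cutset_of_subshore:
  assumes "finite V" "finite E" "\<forall>e\<in>E. c e > 0" "\<forall>e\<in>E. ends e \<subseteq> V"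
    and "\<forall>e\<in>E. finite (ends e) \<and> card (ends e) \<le> 2" "T \<subseteq> V"
    and "separating V T S W" "cap c (delta E ends W) = mincut V E ends T c S"
    and "C \<subseteq> W" "delta E ends C \<subseteq> delta E ends W"
  shows "is_min_cutset V E ends T c (T \<inter> C) (delta E ends C)"
proof (rule is_min_cutsetI[OF assms(1)])
  show "separating V T (T \<inter> C) C"
    using assms(7,9) unfolding separating_def by blast
  fix X assume X: "separating V T (T \<inter> C) X"
  note uncross = cap_delta_le_uncross[OF assms(1-3,5,7-10)]
  show "cap c (delta E ends C) \<le> cap c (delta E ends X)"
  proof (cases "X \<inter> T = T \<inter> C")
    case True
    with X show ?thesis by (intro uncross) (auto simp: separating_def)
  next
    case False
    with X assms(6) have "(V - X) \<inter> T = C \<inter> T"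
      unfolding separating_def by blast
    then show ?thesis
      using uncross[of "V - X"] delta_Diff_compl[OF assms(4)] by simp
  qed
qed

theorem lemma2p3:
  fixes V :: "'a set" and E :: "'e set" and ends :: "'e \<Rightarrow> 'a set"
    and T :: "'a set" and c :: "'e \<Rightarrow> real" and k :: nat and S C :: "'a set"
  assumes "kterminal_network V E ends T c k"
    and "unique_mincuts V E ends T c"
    and "S \<subseteq> T" and "S \<noteq> {}" and "S \<noteq> T"
    and "C \<in> CC V E ends (E_S V E ends T c S)"
  shows "delta E ends C = E_S V E ends T c (T \<inter> C)"
proof -
  from assms(1) have finV: "finite V" and finE: "finite E"
    and endsV: "\<forall>e\<in>E. ends e \<subseteq> V" and ends2: "\<forall>e\<in>E. finite (ends e) \<and> card (ends e) \<le> 2"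
    and conn: "connected_graph V E ends" and cpos: "\<forall>e\<in>E. c e > 0" and TV: "T \<subseteq> V"
    unfolding kterminal_network_def by (auto intro: finite_subset)
  define F where "F = E_S V E ends T c S"
  obtain v where v: "v \<in> V" "C = {u. (v, u) \<in> (adj E ends F)\<^sup>*}"
    using assms(6) unfolding CC_def F_def by blast
  obtain W where W: "separating V T S W" "delta E ends W = F"
      "cap c (delta E ends W) = mincut V E ends T c S" "v \<in> W"
    using min_cutset_shore_through[OF E_S_min_cutset[OF assms(2-5)] endsV assms(3) TV v(1)]
    unfolding F_def by blast
  have CW: "C \<subseteq> W"
    unfolding v(2) using W(2,4) by (intro reachable_subset) simp_all
  have "delta E ends C \<subseteq> delta E ends W"
    unfolding v(2) W(2) by (rule delta_reachable_subset)
  from min_cutset_of_subshore[OF finV finE cpos endsV ends2 TV W(1,3) CW this]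
  have min: "is_min_cutset V E ends T c (T \<inter> C) (delta E ends C)" .
  have "T \<inter> W \<noteq> T"
    using W(1) assms(3-5) unfolding separating_def by blast
  then have proper: "T \<inter> C \<noteq> T"
    using CW by blast
  have nonempty: "T \<inter> C \<noteq> {}"
  proof
    assume "T \<inter> C = {}"
    with min have "delta E ends C = {}"
      by (intro min_cutset_no_terminals[OF finV finE cpos]) simp
    then have "V \<subseteq> C"
      using connected_graph_delta_empty[OF conn v(1)] v(2) by simp
    with CW TV \<open>T \<inter> W \<noteq> T\<close> show False by blast
  qed
  show ?thesis
    using E_S_eqI[OF assms(2) _ nonempty proper min] by simp
qed

end
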